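(* Assume (A1)–(A3) with functions $\xi_1,\xi_2$ and let $x_0>1$ with $\Phi(x_0)<\infty$. Then the mapping $f:\Theta\times\mathbb R\to\mathbb R$, $f(\theta,x)=\mathbb E[\Phi^*(G(\theta,Z_1)+x)-x]$, is lower semicontinuous, and its set of minimizers $S(f)$ is nonempty, compact, and contained in $\Theta\times[x_l,x_u]$ with $x_l=-\Phi(0)-1-\mathbb E[\xi_2(Z_1)]$ and $x_u=\frac{\Phi(x_0)+1+x_0+\mathbb E[\xi_2(Z_1)]+x_0\mathbb E[\xi_1(Z_1)]}{x_0-1}$.
   Context: $\Theta\subseteq\mathbb R^m$ nonempty compact; $Z_1$ an $\mathbb R^d$-valued random vector with law $\mathbb P^Z$; $G:\Theta\times\mathbb R^d\to\mathbb R$; $\Phi:[0,\infty[\to[0,\infty]$ lower semicontinuous convex, $\Phi(0)<\infty$, $\Phi(x_0)<\infty$ for some $x_0>1$, $\inf\Phi=0$, $\Phi(x)/x\to\infty$; $\Phi^*(y)=\sup_{x\ge0}(xy-\Phi(x))$; $H^{\Phi^*}=\{X:\mathbb E[\Phi^*(c|X|)]<\infty\ \forall c>0\}$. (A1) $G$ is $\mathcal B(\Theta)\otimes\mathcal B(\mathbb R^d)$-measurable and $G(\cdot,z)$ lower semicontinuous. (A2) $\sup_\theta|G(\theta,z)|\le\xi_1(z)$, $\xi_1$ $\mathbb P^Z$-integrable. (A3) $G(\theta,Z_1)\in H^{\Phi^*}$ for all $\theta$, and $\sup_\theta|\Phi^*(G(\theta,z))|\le\xi_2(z)$, $\xi_2$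 $\mathbb P^Z$-integrable. *)

theory Defs
  imports "HOL-Probability.Probability"
begin

definition lsc_on :: "'a::topological_space set \<Rightarrow> ('a \<Rightarrow> 'b::linorder) \<Rightarrow> bool" where
  "lsc_on S f \<longleftrightarrow> (\<forall>x\<in>S. \<forall>a. a < f x \<longrightarrow> (\<forall>\<^sub>F y in at x within S. a < f y))"

definition convex_ext :: "(real \<Rightarrow> ereal) \<Rightarrow> bool" where
  "convex_ext \<Phi> \<longleftrightarrow> (\<forall>x\<ge>0. \<forall>y\<ge>0. \<forall>t\<in>{0..1::real}.
      \<Phi> (t * x + (1 - t) * y) \<le> ereal t * \<Phi> x + ereal (1 - t) * \<Phi> y)"

(* Standing assumptions on \<Phi> : [0,\<infinity>[ \<rightarrow> [0,\<infinity>] (only values on [0,\<infinity>[ matter) *)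
definition young_like :: "(real \<Rightarrow> ereal) \<Rightarrow> bool" where
  "young_like \<Phi> \<longleftrightarrow>
     (\<forall>x\<ge>0. \<Phi> x \<ge> 0) \<and>
     lsc_on {0..} \<Phi> \<and>
     convex_ext \<Phi> \<and>
     \<Phi> 0 < \<infinity> \<and>
     (\<exists>x0>1. \<Phi> x0 < \<infinity>) \<and>
     (INF x\<in>{0..}. \<Phi> x) = 0 \<and>
     ((\<lambda>x. \<Phi> x / ereal x) \<longlongrightarrow> \<infinity>) at_top"

(* Fenchel-Legendre conjugate \<Phi>*(y) = sup_{x\<ge>0} (x y - \<Phi>(x)); under the standing
   assumptions it is finite, so it is taken real-valued. *)
definition Phi_star :: "(real \<Rightarrow> ereal) \<Rightarrow> real \<Rightarrow> real" where
  "Phi_star \<Phi> y = real_of_ereal (SUP x\<in>{0::real..}. ereal (x * y) - \<Phi> x)"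

definition orlicz_heart :: "'w measure \<Rightarrow> (real \<Rightarrow> ereal) \<Rightarrow> ('w \<Rightarrow> real) set" where
  "orlicz_heart M \<Phi> = {X. X \<in> borel_measurable M \<and>
      (\<forall>c>0. (\<integral>\<^sup>+ \<omega>. ennreal (Phi_star \<Phi> (c * \<bar>X \<omega>\<bar>)) \<partial>M) < \<infinity>)}"

definition argmin_set :: "('a \<Rightarrow> real) \<Rightarrow> 'a set \<Rightarrow> 'a set" where
  "argmin_set f D = {p\<in>D. \<forall>q\<in>D. f p \<le> f q}"

end

theory Submission
  imports Defs
begin

text \<open>
  For fixed \<open>z\<close> the integrand \<open>(\<theta>, x) \<mapsto> \<Phi>\<^sup>*(G(\<theta>, z) + x)\<close> is lower semicontinuous, because
  \<open>\<Phi>\<^sup>*\<close> is finite, convex and nondecreasing, hence continuous; all integrands are bounded below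
  by \<open>-\<Phi>(0)\<close>, so Fatou's lemma makes the expectation lower semicontinuous. The bound
  \<open>\<Phi>\<^sup>* \<ge> -\<Phi>(0)\<close> gives \<open>f(\<theta>, x) \<ge> -\<Phi>(0) - x\<close>, and the Fenchel-Young inequality at \<open>x\<^sub>0 > 1\<close>
  gives \<open>f(\<theta>, x) \<ge> (x\<^sub>0 - 1) x - \<Phi>(x\<^sub>0) - x\<^sub>0 E \<xi>\<^sub>1(Z)\<close>; outside \<open>[x\<^sub>l, x\<^sub>u]\<close> both bounds exceed
  \<open>E \<xi>\<^sub>2(Z) \<ge> f(\<theta>, 0)\<close>. A lower semicontinuous function on a closed set that is smaller at some
  point than anywhere outside a compact set \<open>K\<close> attains its minimum, and its minimizers form a
  closed subset of \<open>K\<close>.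
\<close>

section \<open>The conjugate \<open>\<Phi>\<^sup>*\<close>\<close>

lemma Fenchel_SUP_le:
  fixes \<Phi> :: "real \<Rightarrow> ereal"
  assumes nonneg: "\<forall>x\<ge>0. \<Phi> x \<ge> 0"
    and le: "\<And>x. x \<ge> 0 \<Longrightarrow> \<Phi> x \<noteq> \<infinity> \<Longrightarrow> x * y - real_of_ereal (\<Phi> x) \<le> B"
  shows "(SUP x\<in>{0..}. ereal (x * y) - \<Phi> x) \<le> ereal B"
proof (rule SUP_least)
  fix x :: real assume "x \<in> {0..}"
  then have "x \<ge> 0" by simp
  show "ereal (x * y) - \<Phi> x \<le> ereal B"
  proof (cases "\<Phi> x = \<infinity>")
    case False
    with nonneg \<open>x \<ge> 0\<close> obtain r where "\<Phi> x = ereal r" by (cases "\<Phi> x") auto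
    with le[OF \<open>x \<ge> 0\<close> False] show ?thesis by simp
  qed simp
qed

text \<open>Superlinearity of \<open>\<Phi>\<close> makes the supremum defining \<open>\<Phi>\<^sup>*\<close> finite.\<close>

lemma Fenchel_SUP_finite:
  assumes "young_like \<Phi>"
  shows "\<bar>SUP x\<in>{0..}. ereal (x * y) - \<Phi> x\<bar> \<noteq> \<infinity>"
proof -
  have nonneg: "\<forall>x\<ge>0. \<Phi> x \<ge> 0" and "\<Phi> 0 < \<infinity>"
    and superlinear: "((\<lambda>x. \<Phi> x / ereal x) \<longlongrightarrow> \<infinity>) at_top"
    using assms unfolding young_like_def by auto
  have "\<forall>\<^sub>F x in at_top. ereal (\<bar>y\<bar> + 1) < \<Phi> x / ereal x"
    using order_tendstoD(1)[OF superlinear, of "ereal (\<bar>y\<bar> + 1)"] by simp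
  then obtain N where N: "\<And>x. x \<ge> N \<Longrightarrow> ereal (\<bar>y\<bar> + 1) < \<Phi> x / ereal x"
    unfolding eventually_at_top_linorder by auto
  define N' where "N' = max N 1"
  have "(SUP x\<in>{0..}. ereal (x * y) - \<Phi> x) \<le> ereal (N' * \<bar>y\<bar>)"
  proof (rule Fenchel_SUP_le[OF nonneg])
    fix x assume "x \<ge> 0" "\<Phi> x \<noteq> \<infinity>"
    with nonneg obtain r where r: "\<Phi> x = ereal r" "r \<ge> 0" by (cases "\<Phi> x") auto
    then have Phi_x: "real_of_ereal (\<Phi> x) = r" by simp
    have "0 \<le> N' * \<bar>y\<bar>" unfolding N'_def by simp
    have "x * y \<le> x * \<bar>y\<bar>" using \<open>x \<ge> 0\<close> by (simp add: mult_left_mono)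
    show "x * y - real_of_ereal (\<Phi> x) \<le> N' * \<bar>y\<bar>"
    proof (cases "x \<ge> N'")
      case True
      then have "x > 0" "x \<ge> N" unfolding N'_def by auto
      with N r have "\<bar>y\<bar> + 1 < r / x" by fastforce
      with \<open>x > 0\<close> have "x * \<bar>y\<bar> + x < r" by (simp add: field_simps)
      with \<open>x * y \<le> x * \<bar>y\<bar>\<close> \<open>x > 0\<close> \<open>0 \<le> N' * \<bar>y\<bar>\<close> Phi_x show ?thesis by linarith
    next
      case False
      then have "x * \<bar>y\<bar> \<le> N' * \<bar>y\<bar>" by (simp add: mult_right_mono)
      with \<open>x * y \<le> x * \<bar>y\<bar>\<close> r Phi_x show ?thesis by linarith
    qed
  qed
  moreover have "ereal (0 * y) - \<Phi> 0 \<le> (SUP x\<in>{0..}. ereal (x * y) - \<Phi> x)"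
    by (rule SUP_upper) simp
  moreover have "ereal (0 * y) - \<Phi> 0 \<noteq> -\<infinity>"
    using \<open>\<Phi> 0 < \<infinity>\<close> nonneg by (cases "\<Phi> 0") auto
  ultimately show ?thesis by auto
qed

lemma ereal_Phi_star:
  assumes "young_like \<Phi>"
  shows "ereal (Phi_star \<Phi> y) = (SUP x\<in>{0..}. ereal (x * y) - \<Phi> x)"
  using Fenchel_SUP_finite[OF assms, of y] unfolding Phi_star_def by (rule ereal_real')

lemma Fenchel_Young_Phi_star:
  assumes "young_like \<Phi>" "x \<ge> 0" "\<Phi> x \<noteq> \<infinity>"
  shows "x * y - real_of_ereal (\<Phi> x) \<le> Phi_star \<Phi> y"
proof -
  have "\<forall>x\<ge>0. \<Phi> x \<ge> 0" using assms(1) unfolding young_like_def by auto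
  with assms(2,3) obtain r where r: "\<Phi> x = ereal r" by (cases "\<Phi> x") auto
  have "ereal (x * y) - \<Phi> x \<le> (SUP x\<in>{0..}. ereal (x * y) - \<Phi> x)"
    by (rule SUP_upper) (simp add: assms(2))
  then show ?thesis using r ereal_Phi_star[OF assms(1), of y, symmetric] by simp
qed

lemma Phi_star_le:
  assumes "young_like \<Phi>"
    and "\<And>x. x \<ge> 0 \<Longrightarrow> \<Phi> x \<noteq> \<infinity> \<Longrightarrow> x * y - real_of_ereal (\<Phi> x) \<le> B"
  shows "Phi_star \<Phi> y \<le> B"
proof -
  have "\<forall>x\<ge>0. \<Phi> x \<ge> 0" using assms(1) unfolding young_like_def by auto
  then have "ereal (Phi_star \<Phi> y) \<le> ereal B"
    unfolding ereal_Phi_star[OF assms(1)] by (rule Fenchel_SUP_le) (rule assms(2))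
  then show ?thesis by simp
qed

lemma Phi_star_ge_neg_Phi_0:
  assumes "young_like \<Phi>"
  shows "- real_of_ereal (\<Phi> 0) \<le> Phi_star \<Phi> y"
  using Fenchel_Young_Phi_star[OF assms, of 0 y] assms unfolding young_like_def by auto

lemma mono_Phi_star:
  assumes "young_like \<Phi>"
  shows "mono (Phi_star \<Phi>)"
proof (rule monoI, rule Phi_star_le[OF assms])
  fix y y' x :: real assume "y \<le> y'" "x \<ge> 0" "\<Phi> x \<noteq> \<infinity>"
  then have "x * y \<le> x * y'" by (simp add: mult_left_mono)
  with Fenchel_Young_Phi_star[OF assms \<open>x \<ge> 0\<close> \<open>\<Phi> x \<noteq> \<infinity>\<close>, of y']
  show "x * y - real_of_ereal (\<Phi> x) \<le> Phi_star \<Phi> y'" by simp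
qed

lemma convex_on_Phi_star:
  assumes "young_like \<Phi>"
  shows "convex_on UNIV (Phi_star \<Phi>)"
proof (rule convex_onI)
  fix t a b :: real assume t: "0 < t" "t < 1"
  show "Phi_star \<Phi> ((1 - t) *\<^sub>R a + t *\<^sub>R b) \<le> (1 - t) * Phi_star \<Phi> a + t * Phi_star \<Phi> b"
  proof (rule Phi_star_le[OF assms])
    fix x assume x: "x \<ge> 0" "\<Phi> x \<noteq> \<infinity>"
    have "(1 - t) * (x * a - real_of_ereal (\<Phi> x)) \<le> (1 - t) * Phi_star \<Phi> a"
      "t * (x * b - real_of_ereal (\<Phi> x)) \<le> t * Phi_star \<Phi> b"
      using Fenchel_Young_Phi_star[OF assms x] t by (simp_all add: mult_left_mono)
    then show "x * ((1 - t) *\<^sub>R a + t *\<^sub>R b) - real_of_ereal (\<Phi> x)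
        \<le> (1 - t) * Phi_star \<Phi> a + t * Phi_star \<Phi> b"
      by (simp add: algebra_simps)
  qed
qed simp

lemma continuous_on_Phi_star:
  assumes "young_like \<Phi>"
  shows "continuous_on UNIV (Phi_star \<Phi>)"
  by (rule convex_on_continuous[OF open_UNIV convex_on_Phi_star[OF assms]])

lemma Phi_star_add_le:
  assumes "young_like \<Phi>"
  shows "Phi_star \<Phi> (a + b) \<le> (Phi_star \<Phi> (2 * \<bar>a\<bar>) + Phi_star \<Phi> (2 * \<bar>b\<bar>)) / 2"
proof -
  have "Phi_star \<Phi> (a + b) \<le> Phi_star \<Phi> ((1 - 1/2) *\<^sub>R (2 * \<bar>a\<bar>) + (1/2) *\<^sub>R (2 * \<bar>b\<bar>))"
    by (rule monoD[OF mono_Phi_star[OF assms]]) simp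
  also have "\<dots> \<le> (1 - 1/2) * Phi_star \<Phi> (2 * \<bar>a\<bar>) + (1/2) * Phi_star \<Phi> (2 * \<bar>b\<bar>)"
    by (rule convex_onD[OF convex_on_Phi_star[OF assms]]) auto
  finally show ?thesis by simp
qed

section \<open>Lower semicontinuous functions\<close>

lemma lsc_onD_nhds:
  assumes "lsc_on S f" "x \<in> S" "a < f x"
  obtains U where "open U" "x \<in> U" "\<And>y. y \<in> U \<Longrightarrow> y \<in> S \<Longrightarrow> a < f y"
proof -
  from assms have "\<forall>\<^sub>F y in at x within S. a < f y"
    unfolding lsc_on_def by blast
  then obtain U where "open U" "x \<in> U" "\<And>y. y \<in> U \<Longrightarrow> y \<in> S \<Longrightarrow> y \<noteq> x \<Longrightarrow> a < f y"
    unfolding eventually_at_topological by blast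
  with assms(3) that show thesis by blast
qed

lemma lsc_on_subset: "lsc_on S f \<Longrightarrow> T \<subseteq> S \<Longrightarrow> lsc_on T f"
  unfolding lsc_on_def by (meson at_le filter_leD subsetD)

lemma lsc_on_cong:
  assumes "\<And>x. x \<in> S \<Longrightarrow> f x = g x"
  shows "lsc_on S f \<longleftrightarrow> lsc_on S g"
proof -
  have "(\<forall>\<^sub>F y in at x within S. a < f y) \<longleftrightarrow> (\<forall>\<^sub>F y in at x within S. a < g y)" for x a
    using assms by (intro eventually_cong) (simp_all add: eventually_at_filter always_eventually)
  with assms show ?thesis unfolding lsc_on_def by simp
qed

lemma lsc_on_sequentially:
  assumes "lsc_on S f" "x \<in> S" "\<And>n. s n \<in> S" "s \<longlonglongrightarrow> x" "a < f x"
  shows "\<forall>\<^sub>F n in sequentially. a < f (s n)"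
proof -
  obtain U where "open U" "x \<in> U" and U: "\<And>y. y \<in> U \<Longrightarrow> y \<in> S \<Longrightarrow> a < f y"
    using lsc_onD_nhds[OF assms(1,2,5)] by blast
  from topological_tendstoD[OF assms(4) \<open>open U\<close> \<open>x \<in> U\<close>]
  show ?thesis by eventually_elim (use U assms(3) in blast)
qed

lemma lsc_on_compose_continuous:
  assumes "lsc_on T g" "continuous_on S h" "h ` S \<subseteq> T"
  shows "lsc_on S (\<lambda>x. g (h x))"
  unfolding lsc_on_def
proof (intro ballI allI impI)
  fix x a assume x: "x \<in> S" and a: "a < g (h x)"
  have "h x \<in> T" using x assms(3) by blast
  then obtain U where "open U" "h x \<in> U" and U: "\<And>y. y \<in> U \<Longrightarrow> y \<in> T \<Longrightarrow> a < g y"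
    using lsc_onD_nhds[OF assms(1) _ a] by blast
  have "(h \<longlongrightarrow> h x) (at x within S)"
    using assms(2) x unfolding continuous_on_def by blast
  from topological_tendstoD[OF this \<open>open U\<close> \<open>h x \<in> U\<close>]
  have "\<forall>\<^sub>F y in at x within S. h y \<in> U" .
  moreover have "\<forall>\<^sub>F y in at x within S. y \<in> S"
    by (simp add: eventually_at_filter)
  ultimately show "\<forall>\<^sub>F y in at x within S. a < g (h y)"
    by eventually_elim (use U assms(3) in blast)
qed

lemma lsc_on_add_continuous:
  fixes g h :: "'a::topological_space \<Rightarrow> real"
  assumes "lsc_on S g" "continuous_on S h"
  shows "lsc_on S (\<lambda>x. g x + h x)"
  unfolding lsc_on_def
proof (intro ballI allI impI)
  fix x a assume x: "x \<in> S" and a: "a < g x + h x"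
  define e where "e = (g x + h x - a) / 2"
  have "e > 0" using a by (simp add: e_def)
  have "\<forall>\<^sub>F y in at x within S. g x - e < g y"
    using assms(1) x \<open>e > 0\<close> unfolding lsc_on_def by simp
  moreover have "(h \<longlongrightarrow> h x) (at x within S)"
    using assms(2) x unfolding continuous_on_def by blast
  then have "\<forall>\<^sub>F y in at x within S. h x - e < h y"
    by (rule order_tendstoD) (use \<open>e > 0\<close> in simp)
  ultimately show "\<forall>\<^sub>F y in at x within S. a < g y + h y"
    by eventually_elim (simp add: e_def field_simps)
qed

lemma eventually_less_mono_continuous:
  fixes P :: "real \<Rightarrow> real"
  assumes "mono P" "isCont P a" "y < P a" "\<And>t. t < a \<Longrightarrow> \<forall>\<^sub>F n in F. t < u n"
  shows "\<forall>\<^sub>F n in F. y < P (u n)"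
proof -
  have "(P \<longlongrightarrow> P a) (at_left a)"
    using assms(2) by (simp add: isCont_def filterlim_at_split)
  then have "\<forall>\<^sub>F t in at_left a. y < P t"
    using assms(3) by (rule order_tendstoD)
  moreover have "\<forall>\<^sub>F t in at_left a. t < a"
    by (simp add: eventually_at_filter)
  ultimately have "\<forall>\<^sub>F t in at_left a. t < a \<and> y < P t"
    by (rule eventually_conj[rotated])
  then obtain t where "t < a" "y < P t"
    using eventually_happens'[OF trivial_limit_at_left_real] by blast
  from assms(4)[OF this(1)] show ?thesis
  proof eventually_elim
    case (elim n)
    then have "P t \<le> P (u n)" using assms(1) by (simp add: monoD)
    with \<open>y < P t\<close> show ?case by simp
  qed
qed

lemma lsc_on_mono_continuous_compose:
  fixes P :: "real \<Rightarrow> real"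
  assumes "lsc_on S g" "mono P" "continuous_on UNIV P"
  shows "lsc_on S (\<lambda>x. P (g x))"
  unfolding lsc_on_def
proof (intro ballI allI impI)
  fix x a assume "x \<in> S" "a < P (g x)"
  show "\<forall>\<^sub>F y in at x within S. a < P (g y)"
  proof (rule eventually_less_mono_continuous[OF assms(2) _ \<open>a < P (g x)\<close>])
    show "isCont P (g x)"
      using assms(3) by (simp add: continuous_on_eq_continuous_at)
    show "\<forall>\<^sub>F y in at x within S. t < g y" if "t < g x" for t
      using assms(1) \<open>x \<in> S\<close> that unfolding lsc_on_def by blast
  qed
qed

lemma lsc_on_compact_attains_min:
  fixes f :: "'a::topological_space \<Rightarrow> 'b::linorder"
  assumes "lsc_on K f" "compact K" "K \<noteq> {}"
  shows "\<exists>x\<in>K. \<forall>y\<in>K. f x \<le> f y"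
proof (rule ccontr)
  assume no_min: "\<not> ?thesis"
  \<comment> \<open>The open sets \<open>V k\<close> on which \<open>f\<close> exceeds \<open>f k\<close> cover \<open>K\<close>; in a finite subcover,
    the index of least value lies in no \<open>V k\<close>.\<close>
  define V where "V k = \<Union>{U. open U \<and> (\<forall>z\<in>U \<inter> K. f k < f z)}" for k
  have V_open: "open (V k)" for k
    unfolding V_def by (rule open_Union) blast
  have V_less: "f k < f z" if "z \<in> V k" "z \<in> K" for k z
    using that unfolding V_def by blast
  have cover: "K \<subseteq> (\<Union>k\<in>K. V k)"
  proof
    fix y assume "y \<in> K"
    with no_min obtain k where "k \<in> K" "f k < f y"
      by (meson not_le)
    obtain U where "open U" "y \<in> U" "\<And>z. z \<in> U \<Longrightarrow> z \<in> K \<Longrightarrow> f k < f z"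
      using lsc_onD_nhds[OF assms(1) \<open>y \<in> K\<close> \<open>f k < f y\<close>] by blast
    then have "y \<in> V k"
      unfolding V_def by blast
    with \<open>k \<in> K\<close> show "y \<in> (\<Union>k\<in>K. V k)" by blast
  qed
  obtain D where "D \<subseteq> K" "finite D" and D_cover: "K \<subseteq> (\<Union>k\<in>D. V k)"
    by (rule compactE_image[OF assms(2) V_open cover])
  with assms(3) have "D \<noteq> {}" by auto
  define d where "d = arg_min_on f D"
  have "d \<in> D" "\<And>k. k \<in> D \<Longrightarrow> f d \<le> f k"
    unfolding d_def using \<open>finite D\<close> \<open>D \<noteq> {}\<close>
    by (simp_all add: arg_min_if_finite(1) arg_min_least)
  moreover from \<open>d \<in> D\<close> \<open>D \<subseteq> K\<close> D_cover obtain k where "k \<in> D" "d \<in> V k" by blast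
  ultimately show False
    using V_less[of d k] \<open>D \<subseteq> K\<close> by fastforce
qed

lemma closed_lsc_sublevel:
  assumes "lsc_on S f" "closed S"
  shows "closed {x\<in>S. f x \<le> t}"
  unfolding closed_def
proof (subst open_subopen, intro ballI)
  fix x assume x: "x \<in> - {x \<in> S. f x \<le> t}"
  show "\<exists>U. open U \<and> x \<in> U \<and> U \<subseteq> - {x \<in> S. f x \<le> t}"
  proof (cases "x \<in> S")
    case True
    with x have "t < f x" by auto
    then obtain U where "open U" "x \<in> U" "\<And>y. y \<in> U \<Longrightarrow> y \<in> S \<Longrightarrow> t < f y"
      using lsc_onD_nhds[OF assms(1) True \<open>t < f x\<close>] by blast
    then show ?thesis by (intro exI[of _ U]) (auto dest: leD)
  next
    case False
    moreover have "open (- S)" using assms(2) by (simp add: closed_def)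
    ultimately show ?thesis by (intro exI[of _ "- S"]) blast
  qed
qed

lemma argmin_set_lsc_compact:
  fixes f :: "'a::topological_space \<Rightarrow> real"
  assumes "lsc_on S f" "closed S" "compact K" "K \<subseteq> S" "p \<in> S"
    and outside: "\<And>y. y \<in> S - K \<Longrightarrow> f p < f y"
  shows "argmin_set f S \<noteq> {} \<and> compact (argmin_set f S) \<and> argmin_set f S \<subseteq> K"
proof -
  have "p \<in> K" using outside[of p] assms(5) by blast
  then obtain m where "m \<in> K" and m_min: "\<And>y. y \<in> K \<Longrightarrow> f m \<le> f y"
    using lsc_on_compact_attains_min[OF lsc_on_subset[OF assms(1,4)] assms(3)] by blast
  have m_min_S: "f m \<le> f y" if "y \<in> S" for y
  proof (cases "y \<in> K")
    case False
    with outside[of y] that m_min[OF \<open>p \<in> K\<close>] show ?thesis by simp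
  qed (rule m_min)
  have sub: "argmin_set f S \<subseteq> K"
  proof
    fix y assume "y \<in> argmin_set f S"
    then have "y \<in> S" "f y \<le> f p" using assms(5) unfolding argmin_set_def by auto
    with outside[of y] show "y \<in> K" by (meson DiffI not_less)
  qed
  have "argmin_set f S = K \<inter> {y\<in>S. f y \<le> f m}"
    using sub m_min_S \<open>m \<in> K\<close> assms(4) unfolding argmin_set_def by (auto intro: order_trans)
  then have "compact (argmin_set f S)"
    using assms(3) closed_lsc_sublevel[OF assms(1,2)] by auto
  moreover have "m \<in> argmin_set f S"
    using m_min_S \<open>m \<in> K\<close> assms(4) unfolding argmin_set_def by auto
  ultimately show ?thesis using sub by auto
qed

section \<open>Fatou's lemma and integrability in the Orlicz heart\<close>

lemma (in finite_measure) integral_le_liminf_integral: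
  fixes g :: "'a \<Rightarrow> real" and h :: "nat \<Rightarrow> 'a \<Rightarrow> real"
  assumes "integrable M g" "\<And>n. integrable M (h n)"
    and "\<And>x. x \<in> space M \<Longrightarrow> c \<le> g x" "\<And>n x. x \<in> space M \<Longrightarrow> c \<le> h n x"
    and "\<And>x. x \<in> space M \<Longrightarrow> ereal (g x) \<le> liminf (\<lambda>n. ereal (h n x))"
  shows "ereal (integral\<^sup>L M g) \<le> liminf (\<lambda>n. ereal (integral\<^sup>L M (h n)))"
proof -
  define C where "C = c * measure M (space M)"
  have shift: "(\<integral>\<^sup>+x. ennreal (u x - c) \<partial>M) = ennreal (integral\<^sup>L M u - C)"
    if "integrable M u" "\<And>x. x \<in> space M \<Longrightarrow> c \<le> u x" for u
    using that by (subst nn_integral_eq_integral) (auto simp: C_def mult.commute)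
  have pointwise: "ennreal (g x - c) \<le> liminf (\<lambda>n. ennreal (h n x - c))" if "x \<in> space M" for x
    unfolding le_Liminf_iff
  proof (intro allI impI)
    fix y assume "y < ennreal (g x - c)"
    then obtain s where "0 \<le> s" "y = ennreal s" "s + c < g x"
      by (cases y rule: ennreal_cases) (auto simp: ennreal_less_iff)
    then have "\<forall>\<^sub>F n in sequentially. ereal (s + c) < ereal (h n x)"
      using assms(5)[OF that] unfolding le_Liminf_iff by (auto elim!: allE[where x = "ereal (s + c)"])
    then show "\<forall>\<^sub>F n in sequentially. y < ennreal (h n x - c)"
      by eventually_elim (simp add: \<open>y = ennreal s\<close> \<open>0 \<le> s\<close> ennreal_less_iff)
  qed
  have shifted: "ennreal (integral\<^sup>L M g - C) \<le> liminf (\<lambda>n. ennreal (integral\<^sup>L M (h n) - C))"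
  proof -
    have "ennreal (integral\<^sup>L M g - C) = (\<integral>\<^sup>+x. ennreal (g x - c) \<partial>M)"
      using shift[OF assms(1,3)] by simp
    also have "\<dots> \<le> (\<integral>\<^sup>+x. liminf (\<lambda>n. ennreal (h n x - c)) \<partial>M)"
      by (intro nn_integral_mono_AE AE_I2 pointwise)
    also have "\<dots> \<le> liminf (\<lambda>n. \<integral>\<^sup>+x. ennreal (h n x - c) \<partial>M)"
      using assms(2) by (intro nn_integral_liminf) auto
    finally show ?thesis by (simp add: shift[OF assms(2,4)])
  qed
  have C_le: "C \<le> integral\<^sup>L M (h n)" for n
    using integral_mono[OF _ assms(2), of "\<lambda>_. c"] assms(4) by (simp add: C_def mult.commute)
  show ?thesis
    unfolding le_Liminf_iff
  proof (intro allI impI)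
    fix y assume "y < ereal (integral\<^sup>L M g)"
    show "\<forall>\<^sub>F n in sequentially. y < ereal (integral\<^sup>L M (h n))"
    proof (cases y)
      case (real t)
      show ?thesis
      proof (cases "t < C")
        case True
        then have "t < integral\<^sup>L M (h n)" for n
          using C_le[of n] by linarith
        then show ?thesis using real by (simp add: always_eventually)
      next
        case False
        with \<open>y < _\<close> real have "ennreal (t - C) < ennreal (integral\<^sup>L M g - C)"
          by (simp add: ennreal_less_iff)
        with shifted have "\<forall>\<^sub>F n in sequentially. ennreal (t - C) < ennreal (integral\<^sup>L M (h n) - C)"
          unfolding le_Liminf_iff by blast
        then show ?thesis
          by eventually_elim (use False real in \<open>simp add: ennreal_less_iff\<close>)
      qed
    qed (use \<open>y < _\<close> in auto)
  qed
qed

lemma (in finite_measure) lsc_on_integral: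
  fixes k :: "'b::first_countable_topology \<Rightarrow> 'a \<Rightarrow> real"
  assumes "\<And>p. p \<in> S \<Longrightarrow> integrable M (k p)"
    and "\<And>p x. p \<in> S \<Longrightarrow> x \<in> space M \<Longrightarrow> c \<le> k p x"
    and "\<And>x. x \<in> space M \<Longrightarrow> lsc_on S (\<lambda>p. k p x)"
  shows "lsc_on S (\<lambda>p. integral\<^sup>L M (k p))"
  unfolding lsc_on_def
proof (intro ballI allI impI)
  fix p a assume "p \<in> S" "a < integral\<^sup>L M (k p)"
  show "\<forall>\<^sub>F q in at p within S. a < integral\<^sup>L M (k q)"
  proof (rule sequentially_imp_eventually_within, intro allI impI)
    fix s assume "(\<forall>n. s n \<in> S \<and> s n \<noteq> p) \<and> s \<longlonglongrightarrow> p"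
    then have s: "\<And>n. s n \<in> S" "s \<longlonglongrightarrow> p" by auto
    have "ereal (k p x) \<le> liminf (\<lambda>n. ereal (k (s n) x))" if "x \<in> space M" for x
      unfolding le_Liminf_iff
    proof (intro allI impI)
      fix y assume "y < ereal (k p x)"
      then show "\<forall>\<^sub>F n in sequentially. y < ereal (k (s n) x)"
      proof (cases y)
        case (real t)
        with \<open>y < _\<close> lsc_on_sequentially[OF assms(3)[OF that] \<open>p \<in> S\<close> s, of t]
        show ?thesis by simp
      qed auto
    qed
    then have "ereal (integral\<^sup>L M (k p)) \<le> liminf (\<lambda>n. ereal (integral\<^sup>L M (k (s n))))"
      using s(1) \<open>p \<in> S\<close> by (intro integral_le_liminf_integral[where c = c] assms)
    with \<open>a < _\<close> show "\<forall>\<^sub>F n in sequentially. a < integral\<^sup>L M (k (s n))"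
      unfolding le_Liminf_iff by (auto elim!: allE[where x = "ereal a"])
  qed
qed

lemma borel_measurable_Phi_star:
  assumes "young_like \<Phi>"
  shows "Phi_star \<Phi> \<in> borel_measurable borel"
  by (rule borel_measurable_continuous_onI[OF continuous_on_Phi_star[OF assms]])

lemma (in finite_measure) integrable_Phi_star_heart:
  assumes "young_like \<Phi>" "X \<in> orlicz_heart M \<Phi>" "c > 0"
  shows "integrable M (\<lambda>\<omega>. Phi_star \<Phi> (c * \<bar>X \<omega>\<bar>))"
proof -
  define k where "k \<omega> = Phi_star \<Phi> (c * \<bar>X \<omega>\<bar>)" for \<omega>
  define b where "b = real_of_ereal (\<Phi> 0)"
  have "b \<ge> 0"
    using assms(1) unfolding young_like_def b_def by (auto intro: real_of_ereal_pos)
  have k_measurable: "k \<in> borel_measurable M"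
    using assms(2) unfolding k_def orlicz_heart_def
    by (auto intro: measurable_compose[OF _ borel_measurable_Phi_star[OF assms(1)]])
  have "(\<integral>\<^sup>+ \<omega>. ennreal (k \<omega>) \<partial>M) < \<infinity>"
    using assms(2,3) unfolding orlicz_heart_def k_def by blast
  have norm_k: "ennreal (norm (k \<omega>)) \<le> ennreal (k \<omega>) + ennreal b" for \<omega>
  proof (cases "k \<omega> \<ge> 0")
    case False
    have "-b \<le> k \<omega>" unfolding k_def b_def by (rule Phi_star_ge_neg_Phi_0[OF assms(1)])
    with False show ?thesis by (simp add: ennreal_neg)
  qed simp
  have "(\<integral>\<^sup>+ \<omega>. ennreal (norm (k \<omega>)) \<partial>M) \<le> (\<integral>\<^sup>+ \<omega>. ennreal (k \<omega>) + ennreal b \<partial>M)"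
    by (rule nn_integral_mono) (rule norm_k)
  also have "\<dots> = (\<integral>\<^sup>+ \<omega>. ennreal (k \<omega>) \<partial>M) + ennreal b * emeasure M (space M)"
    using k_measurable by (subst nn_integral_add) auto
  also have "\<dots> < \<infinity>"
    using \<open>(\<integral>\<^sup>+ \<omega>. ennreal (k \<omega>) \<partial>M) < \<infinity>\<close>
    by (simp add: ennreal_mult_eq_top_iff less_top[symmetric])
  finally show ?thesis
    unfolding k_def[symmetric] by (intro integrableI_bounded k_measurable)
qed

lemma (in finite_measure) integrable_Phi_star_shift:
  assumes "young_like \<Phi>" "X \<in> orlicz_heart M \<Phi>"
  shows "integrable M (\<lambda>\<omega>. Phi_star \<Phi> (X \<omega> + x))"
proof (rule Bochner_Integration.integrable_bound)
  define b where "b = real_of_ereal (\<Phi> 0)"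
  show "integrable M (\<lambda>\<omega>. \<bar>Phi_star \<Phi> (2 * \<bar>X \<omega>\<bar>)\<bar> + \<bar>Phi_star \<Phi> (2 * \<bar>x\<bar>)\<bar> + b)"
    using integrable_Phi_star_heart[OF assms, of 2] by auto
  show "(\<lambda>\<omega>. Phi_star \<Phi> (X \<omega> + x)) \<in> borel_measurable M"
    using assms(2) unfolding orlicz_heart_def
    by (auto intro: measurable_compose[OF _ borel_measurable_Phi_star[OF assms(1)]])
  have "b \<ge> 0"
    using assms(1) unfolding young_like_def b_def by (auto intro: real_of_ereal_pos)
  show "AE \<omega> in M. norm (Phi_star \<Phi> (X \<omega> + x))
      \<le> norm (\<bar>Phi_star \<Phi> (2 * \<bar>X \<omega>\<bar>)\<bar> + \<bar>Phi_star \<Phi> (2 * \<bar>x\<bar>)\<bar> + b)"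
  proof (rule AE_I2)
    fix \<omega>
    have "- b \<le> Phi_star \<Phi> (X \<omega> + x)"
      unfolding b_def by (rule Phi_star_ge_neg_Phi_0[OF assms(1)])
    moreover have "Phi_star \<Phi> (X \<omega> + x) \<le> (Phi_star \<Phi> (2 * \<bar>X \<omega>\<bar>) + Phi_star \<Phi> (2 * \<bar>x\<bar>)) / 2"
      by (rule Phi_star_add_le[OF assms(1)])
    ultimately show "norm (Phi_star \<Phi> (X \<omega> + x))
        \<le> norm (\<bar>Phi_star \<Phi> (2 * \<bar>X \<omega>\<bar>)\<bar> + \<bar>Phi_star \<Phi> (2 * \<bar>x\<bar>)\<bar> + b)"
      using \<open>b \<ge> 0\<close> by (simp add: abs_le_iff) linarith
  qed
qed

section \<open>The objective\<close>

locale oce_problem = prob_space M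
  for M :: "'w measure" +
  fixes Z :: "'w \<Rightarrow> 'z::topological_space"
    and \<Theta> :: "'p::{first_countable_topology, t2_space} set"
    and G :: "'p \<Rightarrow> 'z \<Rightarrow> real"
    and \<Phi> :: "real \<Rightarrow> ereal"
    and \<xi>1 \<xi>2 :: "'z \<Rightarrow> real"
  assumes Z_measurable: "Z \<in> borel_measurable M"
    and young_like: "young_like \<Phi>"
    and G_lsc: "\<And>z. lsc_on \<Theta> (\<lambda>\<theta>. G \<theta> z)"
    and G_bound: "\<And>z \<theta>. \<theta> \<in> \<Theta> \<Longrightarrow> \<bar>G \<theta> z\<bar> \<le> \<xi>1 z"
    and \<xi>1_integrable: "integrable (distr M borel Z) \<xi>1"
    and G_heart: "\<And>\<theta>. \<theta> \<in> \<Theta> \<Longrightarrow> (\<lambda>\<omega>. G \<theta> (Z \<omega>)) \<in> orlicz_heart M \<Phi>"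
    and Phi_star_G_bound: "\<And>z \<theta>. \<theta> \<in> \<Theta> \<Longrightarrow> \<bar>Phi_star \<Phi> (G \<theta> z)\<bar> \<le> \<xi>2 z"
    and \<xi>2_integrable: "integrable (distr M borel Z) \<xi>2"
begin

definition objective :: "'p \<times> real \<Rightarrow> real" where
  "objective = (\<lambda>(\<theta>, x). expectation (\<lambda>\<omega>. Phi_star \<Phi> (G \<theta> (Z \<omega>) + x) - x))"

definition x_lower :: real where
  "x_lower = - real_of_ereal (\<Phi> 0) - 1 - expectation (\<lambda>\<omega>. \<xi>2 (Z \<omega>))"

definition x_upper :: "real \<Rightarrow> real" where
  "x_upper x0 = (real_of_ereal (\<Phi> x0) + 1 + x0 + expectation (\<lambda>\<omega>. \<xi>2 (Z \<omega>))
     + x0 * expectation (\<lambda>\<omega>. \<xi>1 (Z \<omega>))) / (x0 - 1)"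

lemma integrable_comp_Z:
  fixes g :: "'z \<Rightarrow> real"
  assumes "integrable (distr M borel Z) g"
  shows "integrable M (\<lambda>\<omega>. g (Z \<omega>))"
proof -
  have "g \<in> borel_measurable borel"
    using borel_measurable_integrable[OF assms] by simp
  from integrable_distr_eq[OF Z_measurable this] assms show ?thesis by simp
qed

lemma integrable_Phi_star_G:
  "\<theta> \<in> \<Theta> \<Longrightarrow> integrable M (\<lambda>\<omega>. Phi_star \<Phi> (G \<theta> (Z \<omega>) + x))"
  by (rule integrable_Phi_star_shift[OF young_like G_heart])

lemma objective_eq:
  assumes "\<theta> \<in> \<Theta>"
  shows "objective (\<theta>, x) = expectation (\<lambda>\<omega>. Phi_star \<Phi> (G \<theta> (Z \<omega>) + x)) - x"
  using integrable_Phi_star_G[OF assms] by (simp add: objective_def prob_space)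

lemma lsc_objective: "lsc_on (\<Theta> \<times> UNIV) objective"
proof -
  let ?k = "\<lambda>p \<omega>. Phi_star \<Phi> (G (fst p) (Z \<omega>) + snd p)"
  have "lsc_on (\<Theta> \<times> UNIV) (\<lambda>p. G (fst p) z)" for z
    by (rule lsc_on_compose_continuous[OF G_lsc continuous_on_fst[OF continuous_on_id]]) auto
  then have "lsc_on (\<Theta> \<times> UNIV) (\<lambda>p. G (fst p) z + snd p)" for z
    by (rule lsc_on_add_continuous[OF _ continuous_on_snd[OF continuous_on_id]])
  then have "lsc_on (\<Theta> \<times> UNIV) (\<lambda>p. expectation (?k p))"
  proof (intro lsc_on_integral[where c = "- real_of_ereal (\<Phi> 0)"])
    show "integrable M (?k p)" if "p \<in> \<Theta> \<times> UNIV" for p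
      using integrable_Phi_star_G that by (auto simp: mem_Times_iff)
    show "- real_of_ereal (\<Phi> 0) \<le> ?k p \<omega>" for p \<omega>
      by (rule Phi_star_ge_neg_Phi_0[OF young_like])
  qed (rule lsc_on_mono_continuous_compose[OF _ mono_Phi_star[OF young_like]
        continuous_on_Phi_star[OF young_like]])
  then have "lsc_on (\<Theta> \<times> UNIV) (\<lambda>p. expectation (?k p) + - snd p)"
    by (rule lsc_on_add_continuous[OF _ continuous_on_minus[OF continuous_on_snd[OF continuous_on_id]]])
  moreover have "lsc_on (\<Theta> \<times> UNIV) objective
      \<longleftrightarrow> lsc_on (\<Theta> \<times> UNIV) (\<lambda>p. expectation (?k p) + - snd p)"
    by (rule lsc_on_cong) (auto simp: objective_eq)
  ultimately show ?thesis by simp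
qed

lemma objective_lower_bound:
  assumes "\<theta> \<in> \<Theta>"
  shows "- real_of_ereal (\<Phi> 0) - x \<le> objective (\<theta>, x)"
proof -
  have "expectation (\<lambda>_. - real_of_ereal (\<Phi> 0)) \<le> expectation (\<lambda>\<omega>. Phi_star \<Phi> (G \<theta> (Z \<omega>) + x))"
    by (intro integral_mono integrable_Phi_star_G[OF assms] Phi_star_ge_neg_Phi_0[OF young_like]) auto
  then show ?thesis by (simp add: objective_eq[OF assms] prob_space)
qed

lemma objective_linear_lower_bound:
  assumes "\<theta> \<in> \<Theta>" "x0 \<ge> 0" "\<Phi> x0 < \<infinity>"
  shows "(x0 - 1) * x - real_of_ereal (\<Phi> x0) - x0 * expectation (\<lambda>\<omega>. \<xi>1 (Z \<omega>)) \<le> objective (\<theta>, x)"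
proof -
  have "expectation (\<lambda>\<omega>. x0 * (x - \<xi>1 (Z \<omega>)) - real_of_ereal (\<Phi> x0))
      \<le> expectation (\<lambda>\<omega>. Phi_star \<Phi> (G \<theta> (Z \<omega>) + x))"
  proof (intro integral_mono integrable_Phi_star_G[OF assms(1)])
    show "integrable M (\<lambda>\<omega>. x0 * (x - \<xi>1 (Z \<omega>)) - real_of_ereal (\<Phi> x0))"
      using integrable_comp_Z[OF \<xi>1_integrable] by auto
    fix \<omega>
    have "x0 * (x - \<xi>1 (Z \<omega>)) \<le> x0 * (G \<theta> (Z \<omega>) + x)"
      using G_bound[OF assms(1), of "Z \<omega>"] assms(2) by (intro mult_left_mono) auto
    with Fenchel_Young_Phi_star[OF young_like assms(2), of "G \<theta> (Z \<omega>) + x"] assms(3)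
    show "x0 * (x - \<xi>1 (Z \<omega>)) - real_of_ereal (\<Phi> x0) \<le> Phi_star \<Phi> (G \<theta> (Z \<omega>) + x)"
      by simp
  qed
  then show ?thesis
    using integrable_comp_Z[OF \<xi>1_integrable] by (simp add: objective_eq[OF assms(1)] prob_space algebra_simps)
qed

lemma objective_zero_le:
  assumes "\<theta> \<in> \<Theta>"
  shows "objective (\<theta>, 0) \<le> expectation (\<lambda>\<omega>. \<xi>2 (Z \<omega>))"
proof -
  have "expectation (\<lambda>\<omega>. Phi_star \<Phi> (G \<theta> (Z \<omega>) + 0)) \<le> expectation (\<lambda>\<omega>. \<xi>2 (Z \<omega>))"
    by (rule integral_mono[OF integrable_Phi_star_G[OF assms] integrable_comp_Z[OF \<xi>2_integrable]])
      (use Phi_star_G_bound[OF assms] in \<open>simp add: abs_le_iff\<close>)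
  then show ?thesis by (simp add: objective_eq[OF assms])
qed


lemma objective_gt_outside:
  assumes "\<theta> \<in> \<Theta>" "\<theta>' \<in> \<Theta>" "x0 > 1" "\<Phi> x0 < \<infinity>" "x \<notin> {x_lower..x_upper x0}"
  shows "objective (\<theta>', 0) < objective (\<theta>, x)"
proof (cases "x < x_lower")
  case True
  then show ?thesis
    using objective_lower_bound[OF assms(1), of x] objective_zero_le[OF assms(2)]
    unfolding x_lower_def by linarith
next
  case False
  with assms(3,5) have "(x0 - 1) * x_upper x0 < (x0 - 1) * x" by simp
  moreover have "(x0 - 1) * x_upper x0 = real_of_ereal (\<Phi> x0) + 1 + x0
      + expectation (\<lambda>\<omega>. \<xi>2 (Z \<omega>)) + x0 * expectation (\<lambda>\<omega>. \<xi>1 (Z \<omega>))"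
    using assms(3) unfolding x_upper_def by simp
  ultimately show ?thesis
    using objective_linear_lower_bound[OF assms(1), of x0 x] objective_zero_le[OF assms(2)] assms(3,4)
    by linarith
qed

lemma argmin_set_objective:
  assumes "\<Theta> \<noteq> {}" "compact \<Theta>" "x0 > 1" "\<Phi> x0 < \<infinity>"
  shows "argmin_set objective (\<Theta> \<times> UNIV) \<noteq> {}
    \<and> compact (argmin_set objective (\<Theta> \<times> UNIV))
    \<and> argmin_set objective (\<Theta> \<times> UNIV) \<subseteq> \<Theta> \<times> {x_lower..x_upper x0}"
proof -
  obtain \<theta>0 where "\<theta>0 \<in> \<Theta>" using assms(1) by blast
  have outside: "objective (\<theta>0, 0) < objective y"
    if "y \<in> \<Theta> \<times> UNIV - \<Theta> \<times> {x_lower..x_upper x0}" for y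
  proof -
    obtain \<theta> x where y: "y = (\<theta>, x)" by (cases y)
    with that have "\<theta> \<in> \<Theta>" "x \<notin> {x_lower..x_upper x0}" by blast+
    with objective_gt_outside[OF _ \<open>\<theta>0 \<in> \<Theta>\<close> assms(3,4)] y show ?thesis by blast
  qed
  have "closed (\<Theta> \<times> (UNIV :: real set))"
    using assms(2) by (simp add: closed_Times compact_imp_closed)
  moreover have "compact (\<Theta> \<times> {x_lower..x_upper x0})"
    using assms(2) by (simp add: compact_Times)
  ultimately show ?thesis
    using \<open>\<theta>0 \<in> \<Theta>\<close> by (intro argmin_set_lsc_compact[OF lsc_objective _ _ _ _ outside]) auto
qed

end

theorem lemma7p3:
  fixes M :: "'w measure"
    and Z :: "'w \<Rightarrow> real ^ 'd"
    and \<Theta> :: "(real ^ 'm) set"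
    and G :: "real ^ 'm \<Rightarrow> real ^ 'd \<Rightarrow> real"
    and \<Phi> :: "real \<Rightarrow> ereal"
    and \<xi>1 \<xi>2 :: "real ^ 'd \<Rightarrow> real"
    and x0 :: real
  assumes M: "prob_space M"
    and Z: "Z \<in> borel_measurable M"
    and \<Theta>: "\<Theta> \<noteq> {}" "compact \<Theta>"
    and \<Phi>: "young_like \<Phi>"
    and x0: "x0 > 1" "\<Phi> x0 < \<infinity>"
    and A1_meas: "(\<lambda>(\<theta>, z). G \<theta> z) \<in> borel_measurable (restrict_space borel \<Theta> \<Otimes>\<^sub>M borel)"
    and A1_lsc: "\<And>z. lsc_on \<Theta> (\<lambda>\<theta>. G \<theta> z)"
    and A2: "\<And>z \<theta>. \<theta> \<in> \<Theta> \<Longrightarrow> \<bar>G \<theta> z\<bar> \<le> \<xi>1 z"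
    and A2_int: "integrable (distr M borel Z) \<xi>1"
    and A3_heart: "\<And>\<theta>. \<theta> \<in> \<Theta> \<Longrightarrow> (\<lambda>\<omega>. G \<theta> (Z \<omega>)) \<in> orlicz_heart M \<Phi>"
    and A3: "\<And>z \<theta>. \<theta> \<in> \<Theta> \<Longrightarrow> \<bar>Phi_star \<Phi> (G \<theta> z)\<bar> \<le> \<xi>2 z"
    and A3_int: "integrable (distr M borel Z) \<xi>2"
  defines "f \<equiv> (\<lambda>(\<theta>, x). prob_space.expectation M (\<lambda>\<omega>. Phi_star \<Phi> (G \<theta> (Z \<omega>) + x) - x))"
    and "xl \<equiv> - real_of_ereal (\<Phi> 0) - 1 - prob_space.expectation M (\<lambda>\<omega>. \<xi>2 (Z \<omega>))"
    and "xu \<equiv> (real_of_ereal (\<Phi> x0) + 1 + x0 + prob_space.expectation M (\<lambda>\<omega>. \<xi>2 (Z \<omega>))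
               + x0 * prob_space.expectation M (\<lambda>\<omega>. \<xi>1 (Z \<omega>))) / (x0 - 1)"
  shows "lsc_on (\<Theta> \<times> UNIV) f
         \<and> argmin_set f (\<Theta> \<times> UNIV) \<noteq> {}
         \<and> compact (argmin_set f (\<Theta> \<times> UNIV))
         \<and> argmin_set f (\<Theta> \<times> UNIV) \<subseteq> \<Theta> \<times> {xl..xu}"
proof -
  interpret oce_problem M Z \<Theta> G \<Phi> \<xi>1 \<xi>2
    using M Z \<Phi> A1_lsc A2 A2_int A3_heart A3 A3_int
    unfolding oce_problem_def oce_problem_axioms_def by blast
  have "f = objective" unfolding f_def objective_def ..
  moreover have "xl = x_lower" "xu = x_upper x0"
    unfolding xl_def xu_def x_lower_def x_upper_def by simp_all
  ultimately show ?thesis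
    using lsc_objective argmin_set_objective[OF \<Theta> x0] by simp
qed

end
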